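(* Let $\Delta$ be a pure $d$-dimensional APC simplicial complex, $0\le i<d$, let $\Upsilon$ be an $i$-dimensional spanning tree of $\Delta$ with $\tilde H_{i-1}(\Upsilon;\mathbb{Z})=0$, and let $\Theta=\Delta_i\setminus\Upsilon_i$. Then, with $L=L_{\Delta,i}$, $$L\big(C_i(\Delta;\mathbb{Z})\big)=L\big(C_i(\Theta;\mathbb{Z})\big),$$ where $C_i(\Theta;\mathbb{Z})\subseteq C_i(\Delta;\mathbb{Z})$ is the span of the faces in $\Theta$.
   Context: For a finite simplicial complex $\Delta$, $\Delta_i$ is its set of $i$-faces, $\Delta_{(i)}$ its $i$-skeleton, $f_i=|\Delta_i|$. $C_i(\Delta;\mathbb{Z})$ is free abelian on the (fixed-orientation) $i$-faces, $\partial_{\Delta,i}$ the simplicial boundary map, and $\partial^*_{\Delta,i}$ its transpose. The combinatorial Laplacian is $L_{\Delta,i}=\partial_{i+1}\partial^*_{i+1}:C_i(\Delta;\mathbb{Z})\to C_i(\Delta;\mathbb{Z})$. $\tilde H$ is reduced homology, $\beta_i=\dim_\mathbb{Q}\tilde H_i(\cdot;\mathbb{Q})$. A pure $d$-dimensional complex is APC if $\tilde H_j(\Delta;\mathbb{Q})=0$ for all $j<d$. For a pure $k$-dimensional complex $\Gamma$, a subcomplex $\Upsilon$ with $\Upsilon_{(k-1)}=\Gamma_{(k-1)}$ is a spanning tree if $\tilde H_k(\Upsilon;\mathbb{Z})=0$, $\tilde H_{k-1}(\Upsilon;\mathbb{Q})=0$, and $f_k(\Upsilon)=f_k(\Gamma)-\beta_k(\Gamma)+\beta_{k-1}(\Gamma)$;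 an $i$-dimensional spanning tree of $\Delta$ is a spanning tree of $\Delta_{(i)}$. *)

theory Defs
  imports Complex_Main "HOL-Library.Function_Algebras"
begin

text \<open>Faces are finite vertex sets;
  the empty face is included (it is the unique face of dimension -1), so that the chain
  complex below is the augmented one and its homology is reduced homology.
  Orientation of a face is fixed by the order of the vertices.\<close>

definition simplicial_complex :: "'a set set \<Rightarrow> bool" where
  "simplicial_complex K \<longleftrightarrow> finite K \<and> {} \<in> K \<and> (\<forall>F\<in>K. finite F \<and> (\<forall>G. G \<subseteq> F \<longrightarrow> G \<in> K))"

definition faces :: "'a set set \<Rightarrow> int \<Rightarrow> 'a set set" where
  "faces K j = {F \<in> K. int (card F) = j + 1}"

definition skel :: "'a set set \<Rightarrow> int \<Rightarrow> 'a set set" where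
  "skel K j = {F \<in> K. int (card F) \<le> j + 1}"

definition pure :: "'a set set \<Rightarrow> int \<Rightarrow> bool" where
  "pure K d \<longleftrightarrow> (\<forall>F\<in>K. int (card F) \<le> d + 1) \<and> (\<forall>F\<in>K. \<exists>G\<in>faces K d. F \<subseteq> G)"

definition chains_on :: "'a set set \<Rightarrow> ('a set \<Rightarrow> 'r::comm_ring_1) set" where
  "chains_on S = {c. \<forall>F. F \<notin> S \<longrightarrow> c F = 0}"

definition chains :: "'a set set \<Rightarrow> int \<Rightarrow> ('a set \<Rightarrow> 'r::comm_ring_1) set" where
  "chains K j = chains_on (faces K j)"

definition sgn_face :: "'a::linorder set \<Rightarrow> 'a set \<Rightarrow> 'r::comm_ring_1" where
  "sgn_face F G = (-1) ^ card {u \<in> F. u < the_elem (F - G)}"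

definition bd :: "'a::linorder set set \<Rightarrow> int \<Rightarrow> ('a set \<Rightarrow> 'r::comm_ring_1) \<Rightarrow> ('a set \<Rightarrow> 'r)" where
  "bd K j c = (\<lambda>G. if G \<in> faces K (j - 1)
      then (\<Sum>F\<in>{F \<in> faces K j. G \<subseteq> F}. sgn_face F G * c F) else 0)"

definition cobd :: "'a::linorder set set \<Rightarrow> int \<Rightarrow> ('a set \<Rightarrow> 'r::comm_ring_1) \<Rightarrow> ('a set \<Rightarrow> 'r)" where
  "cobd K j c = (\<lambda>F. if F \<in> faces K j
      then (\<Sum>G\<in>{G \<in> faces K (j - 1). G \<subseteq> F}. sgn_face F G * c G) else 0)"

definition laplacian :: "'a::linorder set set \<Rightarrow> int \<Rightarrow> ('a set \<Rightarrow> 'r::comm_ring_1) \<Rightarrow> ('a set \<Rightarrow> 'r)" where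
  "laplacian K i = bd K (i + 1) \<circ> cobd K (i + 1)"

definition cycles :: "'a::linorder set set \<Rightarrow> int \<Rightarrow> ('a set \<Rightarrow> 'r::comm_ring_1) set" where
  "cycles K j = {c \<in> chains K j. bd K j c = (\<lambda>_. 0)}"

definition boundaries :: "'a::linorder set set \<Rightarrow> int \<Rightarrow> ('a set \<Rightarrow> 'r::comm_ring_1) set" where
  "boundaries K j = bd K (j + 1) ` chains K (j + 1)"

definition homology_vanishes :: "'r::comm_ring_1 itself \<Rightarrow> 'a::linorder set set \<Rightarrow> int \<Rightarrow> bool" where
  "homology_vanishes _ K j \<longleftrightarrow> (cycles K j :: ('a set \<Rightarrow> 'r) set) = boundaries K j"

definition betti :: "'a::linorder set set \<Rightarrow> int \<Rightarrow> int" where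
  "betti K j = int (vector_space.dim (\<lambda>(a::rat) f x. a * f x) (cycles K j :: ('a set \<Rightarrow> rat) set))
             - int (vector_space.dim (\<lambda>(a::rat) f x. a * f x) (boundaries K j :: ('a set \<Rightarrow> rat) set))"

definition APC :: "'a::linorder set set \<Rightarrow> int \<Rightarrow> bool" where
  "APC K d \<longleftrightarrow> pure K d \<and> (\<forall>j<d. homology_vanishes TYPE(rat) K j)"

definition spanning_tree :: "'a::linorder set set \<Rightarrow> int \<Rightarrow> 'a set set \<Rightarrow> bool" where
  "spanning_tree \<Gamma> k \<Upsilon> \<longleftrightarrow> simplicial_complex \<Upsilon> \<and> \<Upsilon> \<subseteq> \<Gamma> \<and>
     skel \<Upsilon> (k - 1) = skel \<Gamma> (k - 1) \<and>
     homology_vanishes TYPE(int) \<Upsilon> k \<and> homology_vanishes TYPE(rat) \<Upsilon> (k - 1) \<and>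
     int (card (faces \<Upsilon> k)) = int (card (faces \<Gamma> k)) - betti \<Gamma> k + betti \<Gamma> (k - 1)"

end

theory Submission
  imports Defs
begin

text \<open>
  Since L = \<partial>_{i+1} \<partial>*_{i+1} kills every coboundary
  \<partial>*_i b (because \<partial>*_{i+1} \<partial>*_i = 0), it suffices to show that every integral i-chain c
  can be corrected by a coboundary \<partial>*_i b so that c - \<partial>*_i b vanishes on the tree faces \<Upsilon>_i,
  i.e. that the functionals b \<mapsto> (\<partial>*_i b)(F), F \<in> \<Upsilon>_i, jointly take all integer values.
  These functionals are the pairings with the boundary vectors \<partial>F, F \<in> \<Upsilon>_i.
  The tree has no (i+1)-faces and H_i(\<Upsilon>; \<int>) = 0, so these vectors are linearly independent;
  H_{i-1}(\<Upsilon>; \<int>) = 0 makes their span saturated (a cycle k x with k \<noteq> 0 in the span forces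
  x into the span). An independent family of integer vectors with saturated span admits a
  dual family of integer functionals, which is the lattice fact we need.
\<close>

definition lincomb :: "'j set \<Rightarrow> ('j \<Rightarrow> int) \<Rightarrow> ('j \<Rightarrow> 'b \<Rightarrow> int) \<Rightarrow> 'b \<Rightarrow> int" where
  "lincomb J c a = (\<lambda>y. \<Sum>j\<in>J. c j * a j y)"

definition pairing :: "'b set \<Rightarrow> ('b \<Rightarrow> int) \<Rightarrow> ('b \<Rightarrow> int) \<Rightarrow> int" where
  "pairing S u x = (\<Sum>y\<in>S. u y * x y)"

definition supported :: "'b set \<Rightarrow> 'j set \<Rightarrow> ('j \<Rightarrow> 'b \<Rightarrow> int) \<Rightarrow> bool" where
  "supported S J a \<longleftrightarrow> (\<forall>j\<in>J. \<forall>y. y \<notin> S \<longrightarrow> a j y = 0)"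

definition independent_family :: "'j set \<Rightarrow> ('j \<Rightarrow> 'b \<Rightarrow> int) \<Rightarrow> bool" where
  "independent_family J a \<longleftrightarrow> (\<forall>c. lincomb J c a = (\<lambda>_. 0) \<longrightarrow> (\<forall>j\<in>J. c j = 0))"

definition saturated_family :: "'j set \<Rightarrow> ('j \<Rightarrow> 'b \<Rightarrow> int) \<Rightarrow> bool" where
  "saturated_family J a \<longleftrightarrow>
     (\<forall>k x c. k \<noteq> 0 \<longrightarrow> (\<lambda>y. k * x y) = lincomb J c a \<longrightarrow> (\<exists>c'. x = lincomb J c' a))"

text \<open>Destruction rules, stated separately so that they instantiate without higher-order
  unification.\<close>
lemma independent_familyD: "independent_family J a \<Longrightarrow> lincomb J c a = (\<lambda>_. 0) \<Longrightarrow> j \<in> J \<Longrightarrow> c j = 0"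
  unfolding independent_family_def by blast

lemma saturated_familyD:
  "saturated_family J a \<Longrightarrow> k \<noteq> 0 \<Longrightarrow> (\<lambda>y. k * x y) = lincomb J c a \<Longrightarrow> \<exists>c'. x = lincomb J c' a"
  unfolding saturated_family_def by blast

lemma pairing_lincomb: "pairing S u (lincomb J c a) = (\<Sum>j\<in>J. c j * pairing S u (a j))"
  unfolding pairing_def lincomb_def
  by (simp add: sum_distrib_left sum.swap[of _ S] algebra_simps)

lemma pairing_add_left: "pairing S (\<lambda>y. v y + s * u y) x = pairing S v x + s * pairing S u x"
  unfolding pairing_def by (simp add: sum.distrib sum_distrib_left algebra_simps)

lemma pairing_diff_right: "pairing S u (\<lambda>y. x y - r * z y) = pairing S u x - r * pairing S u z"
  unfolding pairing_def by (simp add: sum_subtractf sum_distrib_left algebra_simps)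

lemma pairing_scale_right: "pairing S u (\<lambda>y. k * x y) = k * pairing S u x"
  unfolding pairing_def by (simp add: sum_distrib_left algebra_simps)

lemma lincomb_insert:
  "finite J \<Longrightarrow> j0 \<notin> J \<Longrightarrow> lincomb (insert j0 J) c a = (\<lambda>y. c j0 * a j0 y + lincomb J c a y)"
  unfolding lincomb_def by simp

lemma lincomb_unit: "finite J \<Longrightarrow> j0 \<in> J \<Longrightarrow> lincomb J (\<lambda>j. if j = j0 then 1 else 0) a = a j0"
  unfolding lincomb_def by (simp add: if_distrib[of "\<lambda>t. t * _"] sum.delta' cong: if_cong)

lemma bezout_finite:
  fixes f :: "'b \<Rightarrow> int"
  assumes "finite S"
  shows "\<exists>u. (\<Sum>y\<in>S. u y * f y) = Gcd (f ` S)"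
  using assms
proof (induction S rule: finite_induct)
  case empty
  then show ?case by simp
next
  case (insert y S)
  then obtain u where u: "(\<Sum>z\<in>S. u z * f z) = Gcd (f ` S)" by blast
  obtain p q where pq: "p * f y + q * Gcd (f ` S) = gcd (f y) (Gcd (f ` S))"
    using bezout_int by blast
  let ?u = "(\<lambda>z. q * u z)(y := p)"
  have "(\<Sum>z\<in>S. ?u z * f z) = q * (\<Sum>z\<in>S. u z * f z)"
    using insert.hyps by (auto simp: sum_distrib_left mult.assoc intro!: sum.cong)
  then have "(\<Sum>z\<in>insert y S. ?u z * f z) = p * f y + q * Gcd (f ` S)"
    using insert.hyps u by simp
  then show ?case using pq by auto
qed

text \<open>Its entries have gcd g \<noteq> 0 (independence); a j0 / g lies in
  the span by saturation, so independence forces g = 1, and Bezout gives the functional.\<close>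
lemma primitive_member:
  assumes fJ: "finite J" and fS: "finite S" and j0: "j0 \<in> J"
    and sp: "supported S J a" and ind: "independent_family J a" and sat: "saturated_family J a"
  shows "\<exists>u. pairing S u (a j0) = 1"
proof -
  let ?g = "Gcd (a j0 ` S)"
  obtain u where u: "pairing S u (a j0) = ?g"
    using bezout_finite[OF fS] unfolding pairing_def by blast
  have g_dvd: "?g dvd a j0 y" for y
    using sp j0 by (cases "y \<in> S") (auto simp: supported_def)
  let ?e = "\<lambda>j. if j = j0 then 1 else 0"
  have a_j0: "lincomb J ?e a = a j0" by (rule lincomb_unit[OF fJ j0])
  have g0: "?g \<noteq> 0"
  proof
    assume "?g = 0"
    then have "a j0 y = 0" for y using g_dvd[of y] by (metis dvd_0_left_iff)
    then have "lincomb J ?e a = (\<lambda>_. 0)" using a_j0 by auto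
    then show False using independent_familyD[OF ind _ j0] by fastforce
  qed
  have "(\<lambda>y. ?g * (a j0 y div ?g)) = lincomb J ?e a"
    using g_dvd a_j0 by auto
  then obtain c where c: "(\<lambda>y. a j0 y div ?g) = lincomb J c a"
    using saturated_familyD[OF sat g0, of "\<lambda>y. a j0 y div ?g"] by blast
  have "lincomb J (\<lambda>j. ?g * c j - ?e j) a = (\<lambda>_. 0)"
  proof
    fix y
    have "lincomb J (\<lambda>j. ?g * c j - ?e j) a y = ?g * lincomb J c a y - lincomb J ?e a y"
      unfolding lincomb_def by (simp add: algebra_simps sum_subtractf sum_distrib_left)
    also have "\<dots> = 0"
      using fun_cong[OF c, of y] a_j0 g_dvd[of y] by (metis dvd_mult_div_cancel diff_self)
    finally show "lincomb J (\<lambda>j. ?g * c j - ?e j) a y = 0" .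
  qed
  then have "?g * c j0 - ?e j0 = 0" by (rule independent_familyD[OF ind _ j0])
  then have "?g * c j0 = 1" by simp
  then have "?g = 1" using Gcd_int_greater_eq_0[of "a j0 ` S"] by (auto simp: zmult_eq_1_iff)
  then show ?thesis using u by metis
qed

text \<open>Induction on J: pick u with value 1 on a j0, replace the other members a l by their
  projections b l = a l - (u \<bullet> a l) a j0 into the kernel of u (again independent, saturated),
  solve for the b l, and correct the solution by a multiple of u.\<close>
lemma saturated_family_dual_onto:
  assumes "finite J" and fS: "finite S"
    and "supported S J a" and "independent_family J a" and "saturated_family J a"
  shows "\<exists>u. \<forall>j\<in>J. pairing S u (a j) = t j"
  using assms(1,3-)
proof (induction J arbitrary: a t rule: finite_induct)
  case empty
  then show ?case by simp
next
  case (insert j0 J)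
  note sp = insert.prems(1) and ind = insert.prems(2) and sat = insert.prems(3)
  obtain u where u: "pairing S u (a j0) = 1"
    using primitive_member[OF _ fS _ sp ind sat] insert.hyps(1) by blast
  define b where "b l = (\<lambda>y. a l y - pairing S u (a l) * a j0 y)" for l
  \<comment> \<open>lift c is the coefficient vector expressing lincomb J c b in terms of the original family\<close>
  define lift where "lift c = c(j0 := - (\<Sum>l\<in>J. c l * pairing S u (a l)))" for c
  have lincomb_b: "lincomb J c b = lincomb (insert j0 J) (lift c) a" for c
  proof -
    have "lincomb J (lift c) a = lincomb J c a"
      using insert.hyps unfolding lift_def lincomb_def by (intro ext sum.cong) auto
    then have "lincomb (insert j0 J) (lift c) a
        = (\<lambda>y. lincomb J c a y - (\<Sum>l\<in>J. c l * pairing S u (a l)) * a j0 y)"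
      unfolding lincomb_insert[OF insert.hyps] by (simp add: lift_def)
    also have "\<dots> = lincomb J c b"
      unfolding lincomb_def b_def
      by (simp add: algebra_simps sum_subtractf sum_distrib_left sum_distrib_right)
    finally show ?thesis by simp
  qed
  have u_b: "pairing S u (b l) = 0" for l
    unfolding b_def by (simp add: pairing_diff_right u)
  have "supported S J b" using sp unfolding supported_def b_def by auto
  moreover have "independent_family J b" unfolding independent_family_def
  proof (intro allI impI ballI)
    fix c l assume "lincomb J c b = (\<lambda>_. 0)" and l: "l \<in> J"
    then have "lift c l = 0" using independent_familyD[OF ind] lincomb_b by simp
    moreover have "l \<noteq> j0" using l insert.hyps by auto
    ultimately show "c l = 0" unfolding lift_def by simp
  qed
  moreover have "saturated_family J b" unfolding saturated_family_def
  proof (intro allI impI)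
    fix k x c assume k: "(k::int) \<noteq> 0" and kx: "(\<lambda>y. k * x y) = lincomb J c b"
    obtain e where e: "x = lincomb (insert j0 J) e a"
      using saturated_familyD[OF sat k, of x "lift c"] kx lincomb_b by auto
    have "k * pairing S u x = pairing S u (lincomb J c b)"
      using kx pairing_scale_right by metis
    also have "\<dots> = 0" by (simp add: pairing_lincomb u_b)
    finally have "pairing S u x = 0" using k by simp
    moreover have "pairing S u x = e j0 + (\<Sum>l\<in>J. e l * pairing S u (a l))"
      using insert.hyps u unfolding e pairing_lincomb by simp
    ultimately have "lift e = e" unfolding lift_def by auto
    then have "x = lincomb J e b" using e lincomb_b by simp
    then show "\<exists>c'. x = lincomb J c' b" by blast
  qed
  ultimately obtain v where v: "\<forall>l\<in>J. pairing S v (b l) = t l - pairing S u (a l) * t j0"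
    using insert.IH[of b "\<lambda>l. t l - pairing S u (a l) * t j0"] by blast
  define w where "w = (\<lambda>y. v y + (t j0 - pairing S v (a j0)) * u y)"
  have "pairing S w (a j0) = t j0"
    unfolding w_def pairing_add_left u by simp
  moreover have "pairing S w (a l) = t l" if "l \<in> J" for l
  proof -
    have "pairing S v (b l) = pairing S v (a l) - pairing S u (a l) * pairing S v (a j0)"
      unfolding b_def by (rule pairing_diff_right)
    then show ?thesis
      using v that unfolding w_def pairing_add_left by (simp add: algebra_simps)
  qed
  ultimately show ?case by blast
qed

lemma finite_faces: "simplicial_complex K \<Longrightarrow> finite (faces K j)"
  unfolding simplicial_complex_def faces_def by auto

definition incidence :: "'a::linorder set set \<Rightarrow> int \<Rightarrow> 'a set \<Rightarrow> 'a set \<Rightarrow> 'r::comm_ring_1" where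
  "incidence K j F G =
     (if F \<in> faces K j \<and> G \<in> faces K (j - 1) \<and> G \<subseteq> F then sgn_face F G else 0)"

text \<open>The sign computation behind \<partial>\<partial> = 0: the two paths from F = G + u + v down to G
  (removing u first or v first) carry opposite signs.\<close>
lemma sgn_face_square:
  fixes G :: "'a::linorder set"
  assumes fin: "finite G" and uv: "u < v" and uG: "u \<notin> G" and vG: "v \<notin> G"
  shows "(sgn_face (insert u (insert v G)) (insert v G) :: 'r::comm_ring_1)
         * sgn_face (insert v G) G
       + sgn_face (insert u (insert v G)) (insert u G) * sgn_face (insert u G) G = 0"
proof -
  let ?F = "insert u (insert v G)"
  have d1: "?F - insert v G = {u}" and d2: "insert v G - G = {v}"
    and d3: "?F - insert u G = {v}" and d4: "insert u G - G = {u}"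
    using uv uG vG by auto
  have s1: "{x \<in> ?F. x < u} = {x \<in> G. x < u}" and s2: "{x \<in> insert v G. x < v} = {x \<in> G. x < v}"
    and s3: "{x \<in> ?F. x < v} = insert u {x \<in> G. x < v}"
    and s4: "{x \<in> insert u G. x < u} = {x \<in> G. x < u}"
    using uv by auto
  have c3: "card (insert u {x \<in> G. x < v}) = Suc (card {x \<in> G. x < v})"
    using fin uG by simp
  show ?thesis
    unfolding sgn_face_def d1 d2 d3 d4 the_elem_eq s1 s2 s3 s4 c3
    by (simp add: algebra_simps)
qed

lemma between_codim_two:
  fixes G :: "'a set"
  assumes "finite G" "u \<notin> G" "v \<notin> G" "u \<noteq> v"
  shows "{H. G \<subseteq> H \<and> H \<subseteq> insert u (insert v G) \<and> card H = Suc (card G)}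
       = {insert u G, insert v G}"
proof (intro set_eqI iffI)
  fix H assume H: "H \<in> {H. G \<subseteq> H \<and> H \<subseteq> insert u (insert v G) \<and> card H = Suc (card G)}"
  define X where "X = H \<inter> {u, v}"
  have split: "H = G \<union> X" and X: "X \<subseteq> {u, v}" using H unfolding X_def by auto
  have "card (G \<union> X) = card G + card X"
    using assms unfolding X_def by (intro card_Un_disjoint) auto
  then have "card X = 1" using H split by simp
  then obtain x where "X = {x}" by (auto simp: card_1_singleton_iff)
  then show "H \<in> {insert u G, insert v G}" using split X by auto
next
  fix H assume "H \<in> {insert u G, insert v G}"
  then show "H \<in> {H. G \<subseteq> H \<and> H \<subseteq> insert u (insert v G) \<and> card H = Suc (card G)}"
    using assms by auto
qed

text \<open>Composite incidences cancel: for faces F, G two dimensions apart, the sum over the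
  intermediate faces has exactly the two terms of the sign lemma.\<close>
lemma incidence_square:
  fixes K :: "'a::linorder set set"
  assumes K: "simplicial_complex K"
  shows "(\<Sum>H\<in>faces K j. incidence K (j + 1) F H * incidence K j H G) = (0::'r::comm_ring_1)"
proof (cases "F \<in> faces K (j + 1) \<and> G \<in> faces K (j - 1) \<and> G \<subseteq> F")
  case False
  then have "incidence K (j + 1) F H * incidence K j H G = (0::'r)" for H
    unfolding incidence_def by auto
  then show ?thesis by simp
next
  case True
  then have FK: "F \<in> K" and finF: "finite F" and GF: "G \<subseteq> F"
    and cF: "card F = card G + 2" and cG: "int (card G) = j"
    using K unfolding faces_def simplicial_complex_def by auto
  have finG: "finite G" using finF GF finite_subset by blast
  have "card (F - G) = 2" using cF finG GF by (simp add: card_Diff_subset)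
  then obtain u v where uv: "u < v" "F - G = {u, v}"
    by (auto simp: card_2_iff) (metis insert_commute neqE)
  have uG: "u \<notin> G" and vG: "v \<notin> G" using uv by auto
  have Feq: "F = insert u (insert v G)" using uv GF by auto
  have between: "{H \<in> faces K j. G \<subseteq> H \<and> H \<subseteq> F} = {insert u G, insert v G}"
  proof -
    have "H \<in> faces K j \<longleftrightarrow> card H = Suc (card G)" if "H \<subseteq> F" for H
      using that FK K cG unfolding faces_def simplicial_complex_def by auto
    then have "{H \<in> faces K j. G \<subseteq> H \<and> H \<subseteq> F}
        = {H. G \<subseteq> H \<and> H \<subseteq> insert u (insert v G) \<and> card H = Suc (card G)}"
      using Feq by blast
    then show ?thesis using between_codim_two[OF finG uG vG] uv by auto
  qed
  have "(\<Sum>H\<in>faces K j. incidence K (j + 1) F H * incidence K j H G)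
      = (\<Sum>H\<in>{H \<in> faces K j. G \<subseteq> H \<and> H \<subseteq> F}. sgn_face F H * (sgn_face H G :: 'r))"
  proof -
    have "incidence K (j + 1) F H * incidence K j H G
        = (if G \<subseteq> H \<and> H \<subseteq> F then sgn_face F H * (sgn_face H G :: 'r) else 0)"
      if "H \<in> faces K j" for H
      using True that unfolding incidence_def by auto
    then show ?thesis
      using finite_faces[OF K] by (simp add: sum.inter_filter)
  qed
  also have "\<dots> = 0"
  proof -
    have "insert u G \<noteq> insert v G" using uv uG by auto
    then show ?thesis
      unfolding between using sgn_face_square[OF finG uv(1) uG vG] Feq by (simp add: add.commute)
  qed
  finally show ?thesis .
qed

lemma bd_incidence:
  assumes "simplicial_complex K"
  shows "bd K j c G = (\<Sum>F\<in>faces K j. c F * incidence K j F G)"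
proof -
  have "(\<Sum>F\<in>faces K j. c F * incidence K j F G)
      = (\<Sum>F\<in>faces K j. if G \<in> faces K (j - 1) \<and> G \<subseteq> F then sgn_face F G * c F else 0)"
    unfolding incidence_def by (intro sum.cong) (auto simp: mult.commute)
  also have "\<dots> = bd K j c G"
    using finite_faces[OF assms] by (simp add: bd_def sum.inter_filter)
  finally show ?thesis by simp
qed

lemma cobd_incidence:
  assumes "simplicial_complex K"
  shows "cobd K j b F = (\<Sum>G\<in>faces K (j - 1). incidence K j F G * b G)"
proof -
  have "(\<Sum>G\<in>faces K (j - 1). incidence K j F G * b G)
      = (\<Sum>G\<in>faces K (j - 1). if F \<in> faces K j \<and> G \<subseteq> F then sgn_face F G * b G else 0)"
    unfolding incidence_def by (intro sum.cong) auto
  also have "\<dots> = cobd K j b F"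
    using finite_faces[OF assms] by (simp add: cobd_def sum.inter_filter)
  finally show ?thesis by simp
qed

lemma bd_bd:
  assumes K: "simplicial_complex K"
  shows "bd K (j - 1) (bd K j c) = (\<lambda>_. 0)"
proof
  fix G
  have "bd K (j - 1) (bd K j c) G
      = (\<Sum>H\<in>faces K (j - 1). \<Sum>F\<in>faces K j. c F * (incidence K j F H * incidence K (j - 1) H G))"
    by (simp add: bd_incidence[OF K] sum_distrib_right mult.assoc)
  also have "\<dots> = (\<Sum>F\<in>faces K j.
      c F * (\<Sum>H\<in>faces K (j - 1). incidence K (j - 1 + 1) F H * incidence K (j - 1) H G))"
    by (simp add: sum.swap[of _ "faces K (j - 1)"] sum_distrib_left)
  also have "\<dots> = 0" by (simp only: incidence_square[OF K]) simp
  finally show "bd K (j - 1) (bd K j c) G = 0" .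
qed

lemma cobd_cobd:
  assumes K: "simplicial_complex K"
  shows "cobd K (j + 1) (cobd K j b) = (\<lambda>_. 0)"
proof
  fix F
  have "cobd K (j + 1) (cobd K j b) F
      = (\<Sum>H\<in>faces K j. \<Sum>G\<in>faces K (j - 1). incidence K (j + 1) F H * incidence K j H G * b G)"
    by (simp add: cobd_incidence[OF K] sum_distrib_left mult.assoc)
  also have "\<dots> = (\<Sum>G\<in>faces K (j - 1).
      (\<Sum>H\<in>faces K j. incidence K (j + 1) F H * incidence K j H G) * b G)"
    by (simp add: sum.swap[of _ "faces K j"] sum_distrib_right)
  also have "\<dots> = 0" by (simp add: incidence_square[OF K])
  finally show "cobd K (j + 1) (cobd K j b) F = 0" .
qed

lemma top_boundary_injective:
  fixes c :: "'a::linorder set \<Rightarrow> int"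
  assumes top: "faces K (j + 1) = {}" and acyclic: "homology_vanishes TYPE(int) K j"
    and c: "c \<in> chains K j" and cycle: "bd K j c = (\<lambda>_. 0)"
  shows "c = (\<lambda>_. 0)"
proof -
  have "c \<in> cycles K j" unfolding cycles_def using c cycle by simp
  then obtain z :: "'a set \<Rightarrow> int" where "c = bd K (j + 1) z"
    using acyclic unfolding homology_vanishes_def boundaries_def by auto
  then show ?thesis unfolding bd_def using top by auto
qed

text \<open>If H_{j-1} = 0, the image of the j-th boundary is saturated: when k x is a boundary with
  k \<noteq> 0, then x is a cycle (\<partial>\<partial> = 0 and no torsion in \<int>), hence itself a boundary.\<close>
lemma boundary_image_saturated:
  fixes x c :: "'a::linorder set \<Rightarrow> int"
  assumes K: "simplicial_complex K" and acyclic: "homology_vanishes TYPE(int) K (j - 1)"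
    and k: "k \<noteq> 0" and kx: "(\<lambda>G. k * x G) = bd K j c"
  shows "\<exists>z. x = bd K j z"
proof -
  have "x \<in> chains K (j - 1)" unfolding chains_def chains_on_def
  proof (intro CollectI allI impI)
    fix G assume "G \<notin> faces K (j - 1)"
    then have "bd K j c G = 0" unfolding bd_def by simp
    then show "x G = 0" using fun_cong[OF kx, of G] k by simp
  qed
  moreover have "bd K (j - 1) x = (\<lambda>_. 0)"
  proof
    fix G
    have "k * bd K (j - 1) x G = bd K (j - 1) (\<lambda>G. k * x G) G"
      unfolding bd_def by (simp add: sum_distrib_left algebra_simps)
    also have "\<dots> = 0" unfolding kx bd_bd[OF K] by simp
    finally show "bd K (j - 1) x G = 0" using k by simp
  qed
  ultimately have "x \<in> cycles K (j - 1)" unfolding cycles_def by simp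
  then show ?thesis
    using acyclic unfolding homology_vanishes_def boundaries_def by auto
qed

text \<open>The boundary
  vectors of the j-faces form an independent family with saturated span, and (\<partial>*_j b)(F) is
  the pairing of b with \<partial>F.\<close>
lemma acyclic_top_coboundary_onto:
  fixes K :: "'a::linorder set set" and t :: "'a set \<Rightarrow> int"
  assumes K: "simplicial_complex K" and top: "faces K (j + 1) = {}"
    and acyclic: "homology_vanishes TYPE(int) K j" "homology_vanishes TYPE(int) K (j - 1)"
  shows "\<exists>b. \<forall>F\<in>faces K j. cobd K j b F = t F"
proof -
  let ?a = "incidence K j :: 'a set \<Rightarrow> 'a set \<Rightarrow> int"
  have bd_lincomb: "bd K j c = lincomb (faces K j) c ?a" for c
    unfolding lincomb_def by (rule ext) (rule bd_incidence[OF K])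
  have "supported (faces K (j - 1)) (faces K j) ?a"
    unfolding supported_def incidence_def by auto
  moreover have "independent_family (faces K j) ?a" unfolding independent_family_def
  proof (intro allI impI ballI)
    fix c F assume "lincomb (faces K j) c ?a = (\<lambda>_. 0)" and F: "F \<in> faces K j"
    define c0 where "c0 G = (if G \<in> faces K j then c G else 0)" for G
    have "lincomb (faces K j) c0 ?a = lincomb (faces K j) c ?a"
      unfolding lincomb_def c0_def by (intro ext sum.cong) auto
    then have "bd K j c0 = (\<lambda>_. 0)" using bd_lincomb \<open>lincomb (faces K j) c ?a = _\<close> by simp
    moreover have "c0 \<in> chains K j" unfolding chains_def chains_on_def c0_def by simp
    ultimately have "c0 = (\<lambda>_. 0)" by (rule top_boundary_injective[OF top acyclic(1), rotated])
    then show "c F = 0" using F fun_cong[of c0 _ F] unfolding c0_def by simp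
  qed
  moreover have "saturated_family (faces K j) ?a" unfolding saturated_family_def
    using boundary_image_saturated[OF K acyclic(2)] by (simp add: bd_lincomb)
  ultimately obtain b where "\<forall>F\<in>faces K j. pairing (faces K (j - 1)) b (?a F) = t F"
    using saturated_family_dual_onto[OF finite_faces[OF K] finite_faces[OF K]] by blast
  moreover have "cobd K j b F = pairing (faces K (j - 1)) b (?a F)" for F
    unfolding cobd_incidence[OF K] pairing_def by (simp add: mult.commute)
  ultimately have "\<forall>F\<in>faces K j. cobd K j b F = t F" by simp
  then show ?thesis by blast
qed

lemma cobd_subcomplex:
  assumes "faces L (j - 1) = faces K (j - 1)" and "F \<in> faces L j" and "faces L j \<subseteq> faces K j"
  shows "cobd L j b F = cobd K j b F"
  using assms unfolding cobd_def by auto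

lemma cobd_diff: "cobd K j (\<lambda>G. x G - y G) = (\<lambda>F. cobd K j x F - cobd K j y F)"
  unfolding cobd_def by (auto simp: sum_subtractf algebra_simps)

text \<open>If coboundaries can prescribe arbitrary values on a set J of i-faces, then the Laplacian
  image is already attained on chains avoiding J: subtracting a suitable coboundary from c
  kills c on J without changing L c, since \<partial>*_{i+1} \<partial>*_i = 0.\<close>
lemma laplacian_image_avoiding:
  fixes K :: "'a::linorder set set"
  assumes K: "simplicial_complex K"
    and onto: "\<And>t. \<exists>b. \<forall>F\<in>J. cobd K i b F = (t F :: 'r::comm_ring_1)"
  shows "(laplacian K i ` chains K i :: ('a set \<Rightarrow> 'r) set)
           = laplacian K i ` chains_on (faces K i - J)"
proof
  show "(laplacian K i ` chains_on (faces K i - J) :: ('a set \<Rightarrow> 'r) set)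
          \<subseteq> laplacian K i ` chains K i"
    by (rule image_mono) (auto simp: chains_def chains_on_def)
next
  show "(laplacian K i ` chains K i :: ('a set \<Rightarrow> 'r) set)
          \<subseteq> laplacian K i ` chains_on (faces K i - J)"
  proof
    fix y :: "'a set \<Rightarrow> 'r" assume "y \<in> laplacian K i ` chains K i"
    then obtain c where c: "c \<in> chains K i" and y: "y = laplacian K i c" by auto
    obtain b where b: "\<forall>F\<in>J. cobd K i b F = c F" using onto[of c] by blast
    define c' where "c' F = c F - cobd K i b F" for F
    have c'_on: "c' \<in> chains_on (faces K i - J)" unfolding chains_on_def
    proof (intro CollectI allI impI)
      fix F assume "F \<notin> faces K i - J"
      then consider "F \<in> J" | "F \<notin> faces K i" by blast
      then show "c' F = 0"
        using b c unfolding c'_def chains_def chains_on_def cobd_def by cases auto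
    qed
    have "cobd K (i + 1) c' = cobd K (i + 1) c"
      unfolding c'_def cobd_diff cobd_cobd[OF K] by simp
    then have "y = laplacian K i c'" unfolding y laplacian_def by simp
    with c'_on show "y \<in> laplacian K i ` chains_on (faces K i - J)" by blast
  qed
qed

lemma spanning_tree_faces:
  assumes "spanning_tree (skel K i) i T"
  shows "faces T (i + 1) = {}" and "faces T (i - 1) = faces K (i - 1)" and "faces T i \<subseteq> faces K i"
proof -
  have sub: "T \<subseteq> skel K i" and sk: "skel T (i - 1) = skel (skel K i) (i - 1)"
    using assms unfolding spanning_tree_def by auto
  show "faces T (i + 1) = {}" using sub unfolding faces_def skel_def by force
  have "F \<in> faces T (i - 1) \<longleftrightarrow> F \<in> skel T (i - 1) \<and> int (card F) = i"
    and "F \<in> faces K (i - 1) \<longleftrightarrow> F \<in> skel (skel K i) (i - 1) \<and> int (card F) = i" for F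
    unfolding faces_def skel_def by auto
  then show "faces T (i - 1) = faces K (i - 1)" using sk by blast
  show "faces T i \<subseteq> faces K i" using sub unfolding faces_def skel_def by auto
qed

text \<open>The theorem: the tree satisfies the hypotheses of the key consequence (its integral H_i
  vanishes by definition of a spanning tree, H_{i-1} by assumption), coboundaries of the tree
  and of \<Delta> agree on tree faces, and the Laplacian image argument applies with J = \<Upsilon>_i.\<close>
theorem claim4:
  fixes \<Delta> \<Upsilon> :: "'a::linorder set set" and d i :: int
  assumes "simplicial_complex \<Delta>"
    and "APC \<Delta> d"
    and "0 \<le> i" and "i < d"
    and "spanning_tree (skel \<Delta> i) i \<Upsilon>"
    and "homology_vanishes TYPE(int) \<Upsilon> (i - 1)"
  shows "(laplacian \<Delta> i ` chains \<Delta> i :: ('a set \<Rightarrow> int) set)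
           = laplacian \<Delta> i ` chains_on (faces \<Delta> i - faces \<Upsilon> i)"
proof -
  have tree: "simplicial_complex \<Upsilon>" "homology_vanishes TYPE(int) \<Upsilon> i"
    using assms(5) unfolding spanning_tree_def by auto
  note tree_faces = spanning_tree_faces[OF assms(5)]
  have "\<exists>b. \<forall>F\<in>faces \<Upsilon> i. cobd \<Delta> i b F = t F" for t :: "'a set \<Rightarrow> int"
  proof -
    obtain b where "\<forall>F\<in>faces \<Upsilon> i. cobd \<Upsilon> i b F = t F"
      using acyclic_top_coboundary_onto[OF tree(1) tree_faces(1) tree(2) assms(6)] by blast
    then show ?thesis using cobd_subcomplex[OF tree_faces(2) _ tree_faces(3)] by metis
  qed
  then show ?thesis by (rule laplacian_image_avoiding[OF assms(1)])
qed

end
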